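(* Let $d\ge2$, $\mu>0$ and $\lambda\ge0$. Then $\mathcal{A}\operatorname{Poi}(\lambda)$ is the Poisson mixture \[ \mathcal{A}\operatorname{Poi}(\lambda)=\operatorname{Poi}\Big(\frac{(U+1)\lambda}{d}+\frac{\mu}{d+1}\Big),\qquad U\sim\operatorname{Bin}\Big(d-1,\;1-\exp\Big(-\frac{\lambda}{d}-\frac{\mu}{d+1}\Big)\Big), \] i.e. it is the law of a random variable $Y$ such that, conditional on $U=u$, $Y\sim\operatorname{Poi}\big(\frac{(u+1)\lambda}{d}+\frac{\mu}{d+1}\big)$.
   Context: The operator $\mathcal{A}$ (depending on fixed $d\ge2$, $\mu>0$): for a probability measure $\pi$ on $\{0,1,2,\dots\}\cup\{\infty\}$, consider a star graph with central vertex $\varnothing'$ and $d+1$ leaves $\varnothing,v_1,\dots,v_d$. Let $X\sim\operatorname{Poi}(\mu)$ and $X_1,\dots,X_d\sim\pi$, all independent; place $X$ particles at $\varnothing'$ and $X_i$ at $v_i$. The particles at $\varnothing'$ and $v_1$ are first-wave particles, active initially. Each particle at $\varnothing'$ moves to a uniformly random leaf among $\varnothing,v_1,\dots,v_d$ and halts; each particle at $v_1$ moves to $\varnothing'$ and then to a uniformly random leaf among $\varnothing,v_2,\dots,v_d$ and halts. For $2\le i\le d$, if some first-wave particle ends at $v_i$, the $X_i$ particles at $v_i$ (second-wave) are activated: each moves to $\varnothing'$ and then to a uniformly random leaf other than $v_i$, and halts; second-wave particles activate nothing. All choices are independent. $\mathcal{A}\pi$ is the law of the number of particles ending at $\varnothing$.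 $\operatorname{Poi}(0)$ denotes the point mass at $0$. *)

theory Defs
  imports "HOL-Probability.Probability"
begin

definition Poi :: "real \<Rightarrow> nat pmf" where
  "Poi r = (if r = 0 then return_pmf 0 else poisson_pmf r)"

primrec seq_pmf :: "'a pmf list \<Rightarrow> 'a list pmf" where
  "seq_pmf [] = return_pmf []"
| "seq_pmf (p # ps) = do {x \<leftarrow> p; xs \<leftarrow> seq_pmf ps; return_pmf (x # xs)}"

text \<open>Leaves are numbered 0 (the leaf varnothing), 1 (= v_1), ..., d (= v_d).
  The central vertex varnothing' is not a leaf.  XX ! (i-1) is the number X_i of particles at v_i.
  A list of final leaf positions is produced; the output is the number of particles ending at leaf 0.\<close>
definition opA :: "nat \<Rightarrow> real \<Rightarrow> nat pmf \<Rightarrow> nat pmf" where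
  "opA d \<mu> \<pi> = do {
     X \<leftarrow> Poi \<mu>;
     XX \<leftarrow> replicate_pmf d \<pi>;
     a \<leftarrow> replicate_pmf X (pmf_of_set {0..d});
     b \<leftarrow> replicate_pmf (XX ! 0) (pmf_of_set ({0..d} - {1}));
     c \<leftarrow> seq_pmf (map (\<lambda>i. if i \<in> set (a @ b)
                               then replicate_pmf (XX ! (i - 1)) (pmf_of_set ({0..d} - {i}))
                               else return_pmf []) [2..<d+1]);
     return_pmf (length (filter (\<lambda>v. v = 0) (a @ b @ concat c)))
   }"

end

theory Submission
  imports Defs
begin

text \<open>When a Poisson number of particles independently choose targets, the numbers arriving at
  the different targets are independent Poisson variables whose rates add up under
  superposition. So the first wave puts independent Poi(\<mu>/(d+1) + \<lambda>/d) numbers of particles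
  on \<open>\<emptyset>, v\<^sub>2, \<dots>, v\<^sub>d\<close>; each \<open>v\<^sub>i\<close> with i \<ge> 2 is therefore activated independently with
  probability 1 - exp(-\<lambda>/d - \<mu>/(d+1)), and an activated leaf sends an independent
  Poi(\<lambda>/d) number of particles to \<open>\<emptyset>\<close>. Adding these independent Poisson variables gives the
  binomial mixture.\<close>

section \<open>Poisson and Bernoulli mixtures\<close>

lemma pmf_Poi: "r \<ge> 0 \<Longrightarrow> pmf (Poi r) k = r ^ k / fact k * exp (- r)"
  by (auto simp: Poi_def indicator_def)

lemma le_of_mem_set_pmf_binomial:
  "k \<in> set_pmf (binomial_pmf n p) \<Longrightarrow> 0 \<le> p \<Longrightarrow> p \<le> 1 \<Longrightarrow> k \<le> n"
  by (auto simp: set_pmf_binomial_eq split: if_splits)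

lemma Poi_thinning:
  assumes r: "r \<ge> 0" and p: "0 \<le> p" "p \<le> 1"
  shows "do {n \<leftarrow> Poi r; k \<leftarrow> binomial_pmf n p; return_pmf (k, n - k)}
       = pair_pmf (Poi (r * p)) (Poi (r * (1 - p)))"
proof (rule pmf_eqI)
  fix x :: "nat \<times> nat"
  obtain i j where x: "x = (i, j)" by (cases x)
  have split: "pmf (binomial_pmf n p \<bind> (\<lambda>k. return_pmf (k, n - k))) (i, j)
      = (if n = i + j then real (n choose i) * p ^ i * (1 - p) ^ j else 0)" for n
  proof -
    have "binomial_pmf n p \<bind> (\<lambda>k. return_pmf (k, n - k)) = map_pmf (\<lambda>k. (k, n - k)) (binomial_pmf n p)"
      by (simp add: map_pmf_def)
    moreover have "(\<lambda>k. (k, n - k)) -` {(i, j)} = (if n - i = j then {i} else {})" by auto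
    ultimately show ?thesis using p
      by (auto simp: pmf_map measure_pmf_single)
  qed
  have "pmf (do {n \<leftarrow> Poi r; k \<leftarrow> binomial_pmf n p; return_pmf (k, n - k)}) (i, j)
      = (\<integral>n. (if n = i + j then real (n choose i) * p ^ i * (1 - p) ^ j else 0) \<partial>measure_pmf (Poi r))"
    by (subst pmf_bind) (simp only: split)
  also have "\<dots> = (\<Sum>n\<in>{i + j}. (if n = i + j then real (n choose i) * p ^ i * (1 - p) ^ j else 0) * pmf (Poi r) n)"
    by (rule integral_measure_pmf_real) (auto split: if_splits)
  also have "\<dots> = real ((i + j) choose i) * p ^ i * (1 - p) ^ j * (r ^ (i + j) / fact (i + j) * exp (- r))"
    using r by (simp add: pmf_Poi)
  also have "\<dots> = (r * p) ^ i / fact i * exp (- (r * p)) * ((r * (1 - p)) ^ j / fact j * exp (- (r * (1 - p))))"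
  proof -
    have "real ((i + j) choose i) = fact (i + j) / (fact i * fact j)"
      by (simp add: binomial_fact)
    moreover have "exp (- r) = exp (- (r * p)) * exp (- (r * (1 - p)))"
      by (simp add: exp_add[symmetric] algebra_simps)
    ultimately show ?thesis
      by (simp add: power_mult_distrib power_add divide_simps)
  qed
  also have "\<dots> = pmf (pair_pmf (Poi (r * p)) (Poi (r * (1 - p)))) (i, j)"
    using r p by (simp add: pmf_pair pmf_Poi)
  finally show "pmf (do {n \<leftarrow> Poi r; k \<leftarrow> binomial_pmf n p; return_pmf (k, n - k)}) x
      = pmf (pair_pmf (Poi (r * p)) (Poi (r * (1 - p)))) x" by (simp add: x)
qed

lemma Poi_add:
  assumes a: "a \<ge> 0" and b: "b \<ge> 0"
  shows "Poi a \<bind> (\<lambda>x. Poi b \<bind> (\<lambda>y. return_pmf (x + y))) = Poi (a + b)"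
proof (cases "a + b = 0")
  case True
  then have "a = 0" "b = 0" using a b by auto
  then show ?thesis by (simp add: Poi_def bind_return_pmf)
next
  case False
  define r where "r = a + b"
  define p where "p = a / r"
  have r: "r > 0" using False a b r_def by auto
  have p: "0 \<le> p" "p \<le> 1" using a b r by (auto simp: p_def r_def field_simps)
  have rp: "r * p = a" "r * (1 - p) = b" using r by (auto simp: p_def r_def field_simps)
  have "Poi a \<bind> (\<lambda>x. Poi b \<bind> (\<lambda>y. return_pmf (x + y))) =
     pair_pmf (Poi (r * p)) (Poi (r * (1 - p))) \<bind> (\<lambda>(k, m). return_pmf (k + m))"
    by (simp add: rp pair_pmf_def bind_assoc_pmf bind_return_pmf)
  also have "\<dots> = Poi r \<bind> (\<lambda>n. binomial_pmf n p \<bind> (\<lambda>k. return_pmf (k + (n - k))))"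
    using r by (simp add: Poi_thinning[OF _ p, symmetric] bind_assoc_pmf bind_return_pmf)
  also have "\<dots> = Poi r \<bind> (\<lambda>n. binomial_pmf n p \<bind> (\<lambda>k. return_pmf n))"
    by (intro bind_pmf_cong refl) (use p le_of_mem_set_pmf_binomial in auto)
  also have "\<dots> = Poi (a + b)" by (simp add: r_def bind_return_pmf')
  finally show ?thesis .
qed

lemma map_pmf_Poi_pos:
  assumes s: "s \<ge> 0"
  shows "map_pmf (\<lambda>k. 0 < k) (Poi s) = bernoulli_pmf (1 - exp (- s))"
proof (rule pmf_eqI)
  fix b :: bool
  have p0: "pmf (Poi s) 0 = exp (- s)" using s by (simp add: pmf_Poi)
  have "pmf (map_pmf (\<lambda>k. 0 < k) (Poi s)) True = 1 - pmf (Poi s) 0"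
  proof -
    have "(\<lambda>k::nat. 0 < k) -` {True} = UNIV - {0}" by auto
    then show ?thesis
      using measure_pmf.prob_compl[of "{0}" "Poi s"] by (simp add: pmf_map measure_pmf_single)
  qed
  moreover have "pmf (map_pmf (\<lambda>k. 0 < k) (Poi s)) False = pmf (Poi s) 0"
  proof -
    have "(\<lambda>k::nat. 0 < k) -` {False} = {0}" by auto
    then show ?thesis by (simp add: pmf_map measure_pmf_single)
  qed
  moreover have "exp (- s) \<le> 1" using s by simp
  ultimately show "pmf (map_pmf (\<lambda>k. 0 < k) (Poi s)) b = pmf (bernoulli_pmf (1 - exp (- s))) b"
    using p0 by (cases b) simp_all
qed

definition mix_pmf :: "real \<Rightarrow> 'a pmf \<Rightarrow> 'a pmf \<Rightarrow> 'a pmf" where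
  "mix_pmf p q1 q2 = bernoulli_pmf p \<bind> (\<lambda>b. if b then q1 else q2)"

lemma Poi_bind_if_pos:
  "s \<ge> 0 \<Longrightarrow> Poi s \<bind> (\<lambda>n. if 0 < n then Z else W) = mix_pmf (1 - exp (- s)) Z W"
  by (simp add: mix_pmf_def map_pmf_Poi_pos[symmetric] bind_map_pmf)

lemma pmf_of_set_insert_eq_mix_pmf:
  assumes "finite S" "S \<noteq> {}" "v \<notin> S"
  shows "pmf_of_set (insert v S) = mix_pmf (1 / real (Suc (card S))) (return_pmf v) (pmf_of_set S)"
proof (rule pmf_eqI)
  fix x
  have c: "card (insert v S) = Suc (card S)" using assms by simp
  have cp: "card S > 0" using assms by (simp add: card_gt_0_iff)
  have "pmf (mix_pmf (1 / real (Suc (card S))) (return_pmf v) (pmf_of_set S)) x =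
     1 / real (Suc (card S)) * indicator {x} v + (1 - 1 / real (Suc (card S))) * (indicator S x / card S)"
    unfolding mix_pmf_def using assms
    by (simp add: pmf_bind integral_measure_pmf_real[where A=UNIV] UNIV_bool)
  also have "\<dots> = indicator (insert v S) x / card (insert v S)"
    using assms cp by (auto simp: c indicator_def field_simps) (use zero_le_square[of "real (card S)"] in linarith)+
  finally show "pmf (pmf_of_set (insert v S)) x = pmf (mix_pmf (1 / real (Suc (card S))) (return_pmf v) (pmf_of_set S)) x"
    using assms by simp
qed

lemma mset_replicate_pmf_mix_pmf:
  assumes p: "0 \<le> p" "p \<le> 1"
  shows "map_pmf mset (replicate_pmf n (mix_pmf p q1 q2)) =
     binomial_pmf n p \<bind> (\<lambda>k. replicate_pmf k q1 \<bind> (\<lambda>xs. replicate_pmf (n - k) q2 \<bind>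
        (\<lambda>ys. return_pmf (mset xs + mset ys))))"
proof (induction n)
  case 0
  then show ?case using p by (simp add: binomial_pmf_0 bind_return_pmf)
next
  case (Suc n)
  define B where "B = binomial_pmf n p"
  define R where "R = (\<lambda>k m. replicate_pmf k q1 \<bind> (\<lambda>xs. replicate_pmf m q2 \<bind>
        (\<lambda>ys. return_pmf (mset xs + mset ys))))"
  have "map_pmf mset (replicate_pmf (Suc n) (mix_pmf p q1 q2)) = mix_pmf p q1 q2 \<bind> (\<lambda>x.
     map_pmf mset (replicate_pmf n (mix_pmf p q1 q2)) \<bind> (\<lambda>M. return_pmf (add_mset x M)))"
    by (simp add: map_pmf_def bind_assoc_pmf bind_return_pmf)
  also have "\<dots> = bernoulli_pmf p \<bind> (\<lambda>b.
     (if b then q1 else q2) \<bind> (\<lambda>x. B \<bind> (\<lambda>k. R k (n - k) \<bind> (\<lambda>M. return_pmf (add_mset x M)))))"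
    unfolding Suc.IH by (simp add: mix_pmf_def bind_assoc_pmf bind_return_pmf B_def R_def)
  also have "\<dots> = bernoulli_pmf p \<bind> (\<lambda>b. B \<bind> (\<lambda>k. R ((if b then 1 else 0) + k) (Suc n - ((if b then 1 else 0) + k))))"
  proof (rule bind_pmf_cong[OF refl])
    fix b :: bool
    have add_q1: "q1 \<bind> (\<lambda>x. R k m \<bind> (\<lambda>M. return_pmf (add_mset x M))) = R (Suc k) m" for k m
      unfolding R_def by (simp add: bind_assoc_pmf bind_return_pmf)
    have add_q2: "q2 \<bind> (\<lambda>x. R k m \<bind> (\<lambda>M. return_pmf (add_mset x M))) = R k (Suc m)" for k m
      unfolding R_def by (simp add: bind_assoc_pmf bind_return_pmf bind_commute_pmf[of q2 "replicate_pmf k q1"])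
    have "k \<le> n" if "k \<in> set_pmf B" for k
      using that p by (simp add: B_def le_of_mem_set_pmf_binomial)
    then have "B \<bind> (\<lambda>k. R k (Suc (n - k))) = B \<bind> (\<lambda>k. R k (Suc n - k))"
      by (intro bind_pmf_cong refl) (simp add: Suc_diff_le)
    then show "(if b then q1 else q2) \<bind> (\<lambda>x. B \<bind> (\<lambda>k. R k (n - k) \<bind> (\<lambda>M. return_pmf (add_mset x M)))) =
      B \<bind> (\<lambda>k. R ((if b then 1 else 0) + k) (Suc n - ((if b then 1 else 0) + k)))"
      by (cases b) (simp_all add: bind_commute_pmf[of _ B] add_q1 add_q2)
  qed
  also have "\<dots> = binomial_pmf (Suc n) p \<bind> (\<lambda>k. R k (Suc n - k))"
    using p by (simp add: binomial_pmf_Suc B_def bind_assoc_pmf bind_return_pmf)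
  finally show ?case by (simp add: R_def)
qed

section \<open>Poisson point processes with finitely many marks\<close>

definition Poisson_process :: "real \<Rightarrow> 'a pmf \<Rightarrow> 'a multiset pmf" where
  "Poisson_process r q = Poi r \<bind> (\<lambda>n. map_pmf mset (replicate_pmf n q))"

lemma Poisson_process_bind:
  "Poi r \<bind> (\<lambda>n. replicate_pmf n q \<bind> (\<lambda>xs. f (mset xs))) = Poisson_process r q \<bind> f"
  by (simp add: Poisson_process_def map_pmf_def bind_assoc_pmf bind_return_pmf)

lemma Poisson_process_mix_pmf:
  assumes r: "r \<ge> 0" and p: "0 \<le> p" "p \<le> 1"
  shows "Poisson_process r (mix_pmf p q1 q2) =
    Poisson_process (r * p) q1 \<bind> (\<lambda>M1. Poisson_process (r * (1 - p)) q2 \<bind> (\<lambda>M2. return_pmf (M1 + M2)))"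
proof -
  define F where "F = (\<lambda>(k, m). replicate_pmf k q1 \<bind> (\<lambda>xs. replicate_pmf m q2 \<bind>
        (\<lambda>ys. return_pmf (mset xs + mset ys))))"
  have "Poisson_process r (mix_pmf p q1 q2) = Poi r \<bind> (\<lambda>n. binomial_pmf n p \<bind> (\<lambda>k. return_pmf (k, n - k) \<bind> F))"
    unfolding Poisson_process_def using p by (simp add: mset_replicate_pmf_mix_pmf bind_return_pmf F_def)
  also have "\<dots> = pair_pmf (Poi (r * p)) (Poi (r * (1 - p))) \<bind> F"
    by (simp add: Poi_thinning[OF r p, symmetric] bind_assoc_pmf)
  also have "\<dots> = Poi (r * p) \<bind> (\<lambda>k. replicate_pmf k q1 \<bind> (\<lambda>xs. Poi (r * (1 - p)) \<bind> (\<lambda>m.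
      replicate_pmf m q2 \<bind> (\<lambda>ys. return_pmf (mset xs + mset ys)))))"
    by (simp add: pair_pmf_def bind_assoc_pmf bind_return_pmf F_def bind_commute_pmf[of "Poi (r * (1 - p))"])
  also have "\<dots> = Poisson_process (r * p) q1 \<bind> (\<lambda>M1. Poisson_process (r * (1 - p)) q2 \<bind> (\<lambda>M2. return_pmf (M1 + M2)))"
    unfolding Poisson_process_bind[symmetric] ..
  finally show ?thesis .
qed

lemma replicate_pmf_return_pmf: "replicate_pmf n (return_pmf v) = return_pmf (replicate n v)"
  by (induction n) (simp_all add: bind_return_pmf)

lemma Poisson_process_return_pmf:
  "Poisson_process r (return_pmf v) = map_pmf (\<lambda>n. replicate_mset n v) (Poi r)"
  by (simp add: Poisson_process_def replicate_pmf_return_pmf map_pmf_def bind_return_pmf)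

fun Poisson_counts :: "('a \<Rightarrow> real) \<Rightarrow> 'a list \<Rightarrow> 'a multiset pmf" where
  "Poisson_counts r [] = return_pmf {#}"
| "Poisson_counts r (v # vs) =
    Poi (r v) \<bind> (\<lambda>n. Poisson_counts r vs \<bind> (\<lambda>M. return_pmf (replicate_mset n v + M)))"

lemma set_pmf_Poisson_counts: "M \<in> set_pmf (Poisson_counts r vs) \<Longrightarrow> set_mset M \<subseteq> set vs"
proof (induction vs arbitrary: M)
  case (Cons v vs)
  then obtain n M' where "M' \<in> set_pmf (Poisson_counts r vs)" "M = replicate_mset n v + M'" by auto
  then show ?case using Cons.IH[of M'] by (auto split: if_splits)
qed simp

lemma Poisson_counts_cong:
  "(\<And>v. v \<in> set vs \<Longrightarrow> r v = s v) \<Longrightarrow> Poisson_counts r vs = Poisson_counts s vs"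
  by (induction vs) auto

lemma Poisson_counts_Cons_rate_0:
  "r v = 0 \<Longrightarrow> Poisson_counts r (v # vs) = Poisson_counts r vs"
  by (simp add: Poi_def bind_return_pmf bind_return_pmf')

lemma Poisson_process_uniform:
  assumes r: "r \<ge> 0"
  shows "distinct vs \<Longrightarrow> vs \<noteq> [] \<Longrightarrow>
    Poisson_process (r * real (length vs)) (pmf_of_set (set vs)) = Poisson_counts (\<lambda>_. r) vs"
proof (induction vs)
  case (Cons v vs)
  show ?case
  proof (cases "vs = []")
    case True
    then show ?thesis
      by (simp add: pmf_of_set_singleton Poisson_process_return_pmf map_pmf_def bind_return_pmf)
  next
    case False
    have v: "distinct vs" "v \<notin> set vs" using Cons.prems by auto
    define p where "p = 1 / real (Suc (length vs))"
    have uniform: "pmf_of_set (set (v # vs)) = mix_pmf p (return_pmf v) (pmf_of_set (set vs))"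
      using pmf_of_set_insert_eq_mix_pmf[of "set vs" v] v False by (simp add: distinct_card p_def)
    have p01: "0 \<le> p" "p \<le> 1" by (simp_all add: p_def)
    have rates: "r * real (length (v # vs)) * p = r" "r * real (length (v # vs)) * (1 - p) = r * real (length vs)"
      by (simp_all add: p_def field_simps)
    have "Poisson_process (r * real (length (v # vs))) (pmf_of_set (set (v # vs))) =
       Poisson_process r (return_pmf v) \<bind> (\<lambda>M1.
         Poisson_process (r * real (length vs)) (pmf_of_set (set vs)) \<bind> (\<lambda>M2. return_pmf (M1 + M2)))"
      unfolding uniform Poisson_process_mix_pmf[OF mult_nonneg_nonneg[OF r of_nat_0_le_iff] p01] rates ..
    then show ?thesis
      using Cons.IH v False by (simp add: Poisson_process_return_pmf bind_map_pmf)
  qed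
qed simp

lemma count_Poisson_counts:
  assumes "v \<notin> set vs"
  shows "map_pmf (\<lambda>M. count M v) (Poisson_counts r (v # vs)) = Poi (r v)"
proof -
  have "map_pmf (\<lambda>M. count M v) (Poisson_counts r (v # vs)) =
      Poi (r v) \<bind> (\<lambda>n. Poisson_counts r vs \<bind> (\<lambda>M. return_pmf (count (replicate_mset n v + M) v)))"
    by (simp add: map_pmf_def bind_assoc_pmf bind_return_pmf)
  also have "\<dots> = Poi (r v) \<bind> (\<lambda>n. Poisson_counts r vs \<bind> (\<lambda>M. return_pmf n))"
  proof (intro bind_pmf_cong refl)
    fix n M assume "M \<in> set_pmf (Poisson_counts r vs)"
    then have "v \<notin># M" using set_pmf_Poisson_counts assms by fastforce
    then show "return_pmf (count (replicate_mset n v + M) v) = return_pmf n" by (simp add: not_in_iff)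
  qed
  finally show ?thesis by (simp add: bind_return_pmf')
qed

lemma Poisson_counts_add:
  assumes "\<And>v. r v \<ge> 0" "\<And>v. s v \<ge> 0"
  shows "Poisson_counts r vs \<bind> (\<lambda>A. Poisson_counts s vs \<bind> (\<lambda>B. return_pmf (A + B))) =
    Poisson_counts (\<lambda>v. r v + s v) vs"
proof (induction vs)
  case Nil
  then show ?case by (simp add: bind_return_pmf)
next
  case (Cons v vs)
  define P where "P = Poisson_counts r vs"
  define Q where "Q = Poisson_counts s vs"
  have rep: "replicate_mset n v + A + (replicate_mset m v + B) = replicate_mset (n + m) v + (A + B)"
    for n m and A B :: "'a multiset"
    by (simp add: multiset_eq_iff)
  have "Poisson_counts r (v # vs) \<bind> (\<lambda>A. Poisson_counts s (v # vs) \<bind> (\<lambda>B. return_pmf (A + B))) =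
    Poi (r v) \<bind> (\<lambda>n. Poi (s v) \<bind> (\<lambda>m. P \<bind> (\<lambda>A. Q \<bind> (\<lambda>B.
      return_pmf (replicate_mset (n + m) v + (A + B))))))"
    unfolding P_def Q_def
    by (simp add: bind_assoc_pmf bind_return_pmf rep bind_commute_pmf[of "Poisson_counts r vs" "Poi (s v)"])
  also have "\<dots> = (Poi (r v) \<bind> (\<lambda>n. Poi (s v) \<bind> (\<lambda>m. return_pmf (n + m)))) \<bind>
      (\<lambda>k. (P \<bind> (\<lambda>A. Q \<bind> (\<lambda>B. return_pmf (A + B)))) \<bind> (\<lambda>M. return_pmf (replicate_mset k v + M)))"
    by (simp add: bind_assoc_pmf bind_return_pmf)
  finally show ?case
    using Cons.IH by (simp add: Poi_add assms P_def Q_def)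
qed

section \<open>Independent sampling along a list\<close>

lemma seq_pmf_replicate: "seq_pmf (replicate n p) = replicate_pmf n p"
  by (induction n) simp_all

lemma map_pmf_map_seq_pmf: "map_pmf (map h) (seq_pmf ps) = seq_pmf (map (map_pmf h) ps)"
proof (induction ps)
  case (Cons p ps)
  have "seq_pmf (map (map_pmf h) (p # ps)) =
      map_pmf h p \<bind> (\<lambda>y. map_pmf (map h) (seq_pmf ps) \<bind> (\<lambda>ys. return_pmf (y # ys)))"
    by (simp add: Cons.IH)
  also have "\<dots> = map_pmf (map h) (seq_pmf (p # ps))"
    by (simp add: map_pmf_def bind_assoc_pmf bind_return_pmf)
  finally show ?case ..
qed simp

lemma replicate_pmf_bind_seq_pmf_zip:
  "replicate_pmf (length js) p \<bind> (\<lambda>xs. seq_pmf (map (\<lambda>(j, x). F j x) (zip js xs)))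
    = seq_pmf (map (\<lambda>j. p \<bind> F j) js)"
proof (induction js)
  case Nil
  then show ?case by (simp add: bind_return_pmf)
next
  case (Cons j js)
  have "replicate_pmf (length (j # js)) p \<bind> (\<lambda>xs. seq_pmf (map (\<lambda>(j, x). F j x) (zip (j # js) xs)))
     = p \<bind> (\<lambda>x. replicate_pmf (length js) p \<bind> (\<lambda>xs. F j x \<bind> (\<lambda>y.
         seq_pmf (map (\<lambda>(j, x). F j x) (zip js xs)) \<bind> (\<lambda>ys. return_pmf (y # ys)))))"
    by (simp add: bind_assoc_pmf bind_return_pmf)
  also have "\<dots> = p \<bind> (\<lambda>x. F j x \<bind> (\<lambda>y. replicate_pmf (length js) p \<bind> (\<lambda>xs.
         seq_pmf (map (\<lambda>(j, x). F j x) (zip js xs)) \<bind> (\<lambda>ys. return_pmf (y # ys)))))"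
    by (rule bind_pmf_cong[OF refl], rule bind_commute_pmf)
  also have "\<dots> = seq_pmf (map (\<lambda>j. p \<bind> F j) (j # js))"
    by (simp add: Cons.IH[symmetric] bind_assoc_pmf)
  finally show ?case .
qed

lemma Poisson_counts_bind_seq_pmf_if_mem:
  assumes "distinct vs" and r: "\<And>v. r v \<ge> 0"
  shows "Poisson_counts r vs \<bind> (\<lambda>M. seq_pmf (map (\<lambda>v. if v \<in># M then Z else W) vs)) =
    seq_pmf (map (\<lambda>v. mix_pmf (1 - exp (- r v)) Z W) vs)"
  using assms(1)
proof (induction vs)
  case Nil
  then show ?case by (simp add: bind_return_pmf)
next
  case (Cons v vs)
  then have v: "v \<notin> set vs" "distinct vs" by auto
  define P where "P = Poisson_counts r vs"
  define S where "S = (\<lambda>M. seq_pmf (map (\<lambda>u. if u \<in># M then Z else W) vs))"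
  have "Poisson_counts r (v # vs) \<bind> (\<lambda>M. seq_pmf (map (\<lambda>u. if u \<in># M then Z else W) (v # vs))) =
     Poi (r v) \<bind> (\<lambda>n. P \<bind> (\<lambda>M. (if v \<in># replicate_mset n v + M then Z else W) \<bind>
       (\<lambda>x. S (replicate_mset n v + M) \<bind> (\<lambda>xs. return_pmf (x # xs)))))"
    by (simp add: P_def S_def bind_assoc_pmf bind_return_pmf)
  also have "\<dots> = Poi (r v) \<bind> (\<lambda>n. P \<bind> (\<lambda>M. (if 0 < n then Z else W) \<bind>
       (\<lambda>x. S M \<bind> (\<lambda>xs. return_pmf (x # xs)))))"
  proof (rule bind_pmf_cong[OF refl], rule bind_pmf_cong[OF refl])
    fix n M assume "M \<in> set_pmf P"
    then have "set_mset M \<subseteq> set vs" by (simp add: P_def set_pmf_Poisson_counts)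
    then have "v \<in># replicate_mset n v + M \<longleftrightarrow> 0 < n" and "S (replicate_mset n v + M) = S M"
      unfolding S_def using v by (auto intro!: arg_cong[where f=seq_pmf] map_cong)
    then show "(if v \<in># replicate_mset n v + M then Z else W) \<bind> (\<lambda>x. S (replicate_mset n v + M) \<bind>
        (\<lambda>xs. return_pmf (x # xs))) = (if 0 < n then Z else W) \<bind> (\<lambda>x. S M \<bind> (\<lambda>xs. return_pmf (x # xs)))"
      by simp
  qed
  also have "\<dots> = (Poi (r v) \<bind> (\<lambda>n. if 0 < n then Z else W)) \<bind> (\<lambda>x. (P \<bind> S) \<bind> (\<lambda>xs. return_pmf (x # xs)))"
    by (simp add: bind_assoc_pmf bind_commute_pmf[of P])
  finally show ?case
    using Cons.IH v by (simp add: P_def S_def Poi_bind_if_pos r)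
qed

lemma binomial_pmf_bind_Poi:
  assumes p: "0 \<le> p" "p \<le> 1" and b: "b \<ge> 0"
  shows "s \<ge> 0 \<Longrightarrow> binomial_pmf n p \<bind> (\<lambda>U. Poi (s + real U * b)) =
    Poi s \<bind> (\<lambda>x. map_pmf sum_list (replicate_pmf n (mix_pmf p (Poi b) (return_pmf 0))) \<bind> (\<lambda>y. return_pmf (x + y)))"
proof (induction n arbitrary: s)
  case 0
  then show ?case using p by (simp add: binomial_pmf_0 bind_return_pmf bind_return_pmf')
next
  case (Suc n)
  define R where "R = map_pmf sum_list (replicate_pmf n (mix_pmf p (Poi b) (return_pmf 0)))"
  have "binomial_pmf (Suc n) p \<bind> (\<lambda>U. Poi (s + real U * b)) =
    bernoulli_pmf p \<bind> (\<lambda>c. binomial_pmf n p \<bind> (\<lambda>k. Poi ((if c then s + b else s) + real k * b)))"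
    using p by (simp add: binomial_pmf_Suc bind_assoc_pmf bind_return_pmf)
       (intro bind_pmf_cong refl, simp add: algebra_simps)
  also have "\<dots> = bernoulli_pmf p \<bind> (\<lambda>c. Poi s \<bind> (\<lambda>x.
      (if c then Poi b else return_pmf 0) \<bind> (\<lambda>w. R \<bind> (\<lambda>r. return_pmf (x + (w + r))))))"
  proof (rule bind_pmf_cong[OF refl])
    fix c :: bool
    have "Poi (s + b) \<bind> (\<lambda>x. R \<bind> (\<lambda>y. return_pmf (x + y))) =
      Poi s \<bind> (\<lambda>x. Poi b \<bind> (\<lambda>w. R \<bind> (\<lambda>r. return_pmf (x + (w + r)))))"
      by (simp add: Poi_add[OF Suc.prems b, symmetric] bind_assoc_pmf bind_return_pmf add.assoc)
    then show "binomial_pmf n p \<bind> (\<lambda>k. Poi ((if c then s + b else s) + real k * b)) =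
       Poi s \<bind> (\<lambda>x. (if c then Poi b else return_pmf 0) \<bind> (\<lambda>w. R \<bind> (\<lambda>r. return_pmf (x + (w + r)))))"
      using Suc.IH[of s] Suc.IH[of "s + b"] Suc.prems b by (cases c) (simp_all add: R_def bind_return_pmf)
  qed
  also have "\<dots> = Poi s \<bind> (\<lambda>x. bernoulli_pmf p \<bind> (\<lambda>c.
      (if c then Poi b else return_pmf 0) \<bind> (\<lambda>w. R \<bind> (\<lambda>r. return_pmf (x + (w + r))))))"
    by (rule bind_commute_pmf)
  also have "\<dots> = Poi s \<bind> (\<lambda>x. map_pmf sum_list (replicate_pmf (Suc n) (mix_pmf p (Poi b) (return_pmf 0))) \<bind>
      (\<lambda>y. return_pmf (x + y)))"
    by (simp only: R_def mix_pmf_def map_pmf_def bind_assoc_pmf bind_return_pmf replicate_pmf.simps sum_list.Cons)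
  finally show ?case .
qed

section \<open>The operator A on Poisson laws\<close>

lemma map_upt_nth_Cons_eq_map_zip:
  assumes "length xs + 1 = d"
  shows "map (\<lambda>i. g i ((x # xs) ! (i - 1))) [2..<d+1] = map (\<lambda>(j, y). g j y) (zip [2..<d+1] xs)"
proof (rule nth_equalityI)
  show "length (map (\<lambda>i. g i ((x # xs) ! (i - 1))) [2..<d+1]) = length (map (\<lambda>(j, y). g j y) (zip [2..<d+1] xs))"
    using assms by simp
next
  fix i assume "i < length (map (\<lambda>i. g i ((x # xs) ! (i - 1))) [2..<d+1])"
  then have i: "i < length xs" using assms by (simp del: upt_Suc)
  then have "[2..<Suc d] ! i = Suc (Suc i)" using assms by (subst nth_upt) auto
  then show "map (\<lambda>i. g i ((x # xs) ! (i - 1))) [2..<d+1] ! i = map (\<lambda>(j, y). g j y) (zip [2..<d+1] xs) ! i"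
    using i assms by (simp add: nth_zip del: upt_Suc)
qed

lemma bind_commute_pmf3:
  fixes A :: "'a pmf" and B :: "'b pmf" and C :: "'c pmf"
  shows "A \<bind> (\<lambda>x. B \<bind> (\<lambda>y. C \<bind> (\<lambda>z. f x y z))) = C \<bind> (\<lambda>z. A \<bind> (\<lambda>x. B \<bind> (\<lambda>y. f x y z)))"
  by (simp add: bind_commute_pmf[of B C] bind_commute_pmf[of A C])

text \<open>The numbers of second-wave particles need only be sampled at activated leaves.\<close>

lemma opA_eq_lazy:
  assumes "d \<ge> 1"
  shows "opA d \<mu> \<pi> = do {
     X \<leftarrow> Poi \<mu>;
     a \<leftarrow> replicate_pmf X (pmf_of_set {0..d});
     x \<leftarrow> \<pi>;
     b \<leftarrow> replicate_pmf x (pmf_of_set ({0..d} - {1}));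
     c \<leftarrow> seq_pmf (map (\<lambda>i. if i \<in> set (a @ b)
                             then \<pi> \<bind> (\<lambda>y. replicate_pmf y (pmf_of_set ({0..d} - {i})))
                             else return_pmf []) [2..<d+1]);
     return_pmf (length (filter (\<lambda>v. v = 0) (a @ b @ concat c)))
   }" (is "_ = ?rhs")
proof -
  obtain d' where d: "d = Suc d'" using assms by (cases d) auto
  define js where "js = [2..<d+1]"
  define Ua where "Ua = pmf_of_set {0..d}"
  define Ub where "Ub = pmf_of_set ({0..d} - {1})"
  define G where "G = (\<lambda>a b j y. if j \<in> set (a @ b) then replicate_pmf y (pmf_of_set ({0..d} - {j})) else return_pmf [])"
  define OUT where "OUT = (\<lambda>a b c. return_pmf (length (filter (\<lambda>v. v = (0::nat)) (a @ b @ concat c))))"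
  have zip: "map (\<lambda>i. G a b i ((x # xs) ! (i - 1))) js = map (\<lambda>(j, y). G a b j y) (zip js xs)"
    if "xs \<in> set_pmf (replicate_pmf d' \<pi>)" for a b x xs
    unfolding js_def by (rule map_upt_nth_Cons_eq_map_zip) (use that in \<open>simp add: set_replicate_pmf d\<close>)
  have "opA d \<mu> \<pi> = Poi \<mu> \<bind> (\<lambda>X. \<pi> \<bind> (\<lambda>x. replicate_pmf d' \<pi> \<bind> (\<lambda>xs.
     replicate_pmf X Ua \<bind> (\<lambda>a. replicate_pmf x Ub \<bind> (\<lambda>b.
     seq_pmf (map (\<lambda>i. G a b i ((x # xs) ! (i - 1))) js) \<bind> OUT a b)))))"
    unfolding opA_def G_def OUT_def js_def Ua_def Ub_def
    by (simp only: d replicate_pmf.simps bind_assoc_pmf bind_return_pmf nth_Cons_0)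
  also have "\<dots> = Poi \<mu> \<bind> (\<lambda>X. \<pi> \<bind> (\<lambda>x. replicate_pmf d' \<pi> \<bind> (\<lambda>xs.
     replicate_pmf X Ua \<bind> (\<lambda>a. replicate_pmf x Ub \<bind> (\<lambda>b.
     seq_pmf (map (\<lambda>(j, y). G a b j y) (zip js xs)) \<bind> OUT a b)))))"
    by (intro bind_pmf_cong refl) (simp only: zip)
  also have "\<dots> = Poi \<mu> \<bind> (\<lambda>X. replicate_pmf X Ua \<bind> (\<lambda>a. \<pi> \<bind> (\<lambda>x. replicate_pmf x Ub \<bind> (\<lambda>b.
     replicate_pmf d' \<pi> \<bind> (\<lambda>xs. seq_pmf (map (\<lambda>(j, y). G a b j y) (zip js xs)) \<bind> OUT a b)))))"
    by (rule bind_pmf_cong[OF refl], rule trans[OF bind_commute_pmf3],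
        (rule bind_pmf_cong[OF refl])+, rule bind_commute_pmf)
  also have "\<dots> = Poi \<mu> \<bind> (\<lambda>X. replicate_pmf X Ua \<bind> (\<lambda>a. \<pi> \<bind> (\<lambda>x. replicate_pmf x Ub \<bind> (\<lambda>b.
     seq_pmf (map (\<lambda>j. \<pi> \<bind> G a b j) js) \<bind> OUT a b))))"
  proof -
    have "length js = d'" by (simp add: js_def d del: upt_Suc)
    then show ?thesis
      by (simp only: replicate_pmf_bind_seq_pmf_zip[symmetric] bind_assoc_pmf)
  qed
  also have "\<dots> = ?rhs"
  proof -
    have "\<pi> \<bind> G a b j = (if j \<in> set (a @ b)
      then \<pi> \<bind> (\<lambda>y. replicate_pmf y (pmf_of_set ({0..d} - {j}))) else return_pmf [])" for a b j
      by (simp add: G_def bind_pmf_const)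
    then show ?thesis by (simp add: OUT_def Ua_def Ub_def js_def)
  qed
  finally show ?thesis .
qed

lemma length_filter_eq_count_mset: "length (filter (\<lambda>v. v = x) xs) = count (mset xs) x"
  by (induction xs) auto

lemma count_mset_concat: "count (mset (concat cs)) x = sum_list (map (\<lambda>c. count (mset c) x) cs)"
  by (induction cs) simp_all

lemma count_Poi_replicate_pmf_uniform:
  fixes d j :: nat
  assumes j: "0 < j" "j \<le> d" and lam: "lam \<ge> 0"
  shows "map_pmf (\<lambda>c. count (mset c) (0::nat)) (Poi lam \<bind> (\<lambda>y. replicate_pmf y (pmf_of_set ({0..d} - {j}))))
    = Poi (lam / d)"
proof -
  define vs where "vs = sorted_list_of_set ({0..d} - {j} - {0})"
  have vs: "distinct (0 # vs)" "set (0 # vs) = {0..d} - {j}"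
    using j by (auto simp: vs_def)
  have "card ({0..d} - {j} - {0}) = d - 1" using j by (simp add: card_Diff_singleton_if)
  then have "lam / d * real (length (0 # vs)) = lam" using j by (simp add: vs_def)
  then have "map_pmf (\<lambda>c. count (mset c) 0) (Poi lam \<bind> (\<lambda>y. replicate_pmf y (pmf_of_set ({0..d} - {j}))))
      = map_pmf (\<lambda>M. count M 0) (Poisson_process (lam / d * real (length (0 # vs))) (pmf_of_set (set (0 # vs))))"
    unfolding vs(2) Poisson_process_def by (simp add: map_bind_pmf map_pmf_comp)
  also have "\<dots> = map_pmf (\<lambda>M. count M 0) (Poisson_counts (\<lambda>_. lam / d) (0 # vs))"
    by (subst Poisson_process_uniform) (use lam vs(1) in auto)
  also have "\<dots> = Poi (lam / d)"
    by (rule count_Poisson_counts) (use vs in simp)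
  finally show ?thesis .
qed

lemma count_second_wave:
  fixes d :: nat and a b :: "nat list"
  assumes lam: "lam \<ge> 0"
  shows "seq_pmf (map (\<lambda>i. if i \<in> set (a @ b)
        then Poi lam \<bind> (\<lambda>y. replicate_pmf y (pmf_of_set ({0..d} - {i}))) else return_pmf []) [2..<d+1]) \<bind>
      (\<lambda>c. return_pmf (length (filter (\<lambda>v. v = 0) (a @ b @ concat c)))) =
    seq_pmf (map (\<lambda>i. if i \<in># mset a + mset b then Poi (lam / d) else return_pmf 0) [2..<d+1]) \<bind>
      (\<lambda>F. return_pmf (count (mset a + mset b) 0 + sum_list F))"
proof -
  define C where "C = (\<lambda>i. if i \<in> set (a @ b)
      then Poi lam \<bind> (\<lambda>y. replicate_pmf y (pmf_of_set ({0..d} - {i}))) else return_pmf [])"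
  define js where "js = [2..<d+1]"
  have "seq_pmf (map C js) \<bind> (\<lambda>c. return_pmf (length (filter (\<lambda>v. v = 0) (a @ b @ concat c)))) =
      map_pmf (map (\<lambda>c. count (mset c) 0)) (seq_pmf (map C js)) \<bind>
        (\<lambda>F. return_pmf (count (mset a + mset b) 0 + sum_list F))"
    by (simp add: bind_map_pmf length_filter_eq_count_mset count_mset_concat add.assoc)
  also have "\<dots> = seq_pmf (map (\<lambda>i. map_pmf (\<lambda>c. count (mset c) 0) (C i)) js) \<bind>
        (\<lambda>F. return_pmf (count (mset a + mset b) 0 + sum_list F))"
    by (simp add: map_pmf_map_seq_pmf comp_def)
  also have "\<dots> = seq_pmf (map (\<lambda>i. if i \<in># mset a + mset b then Poi (lam / d) else return_pmf 0) js) \<bind>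
      (\<lambda>F. return_pmf (count (mset a + mset b) 0 + sum_list F))"
    unfolding C_def js_def
    by (intro arg_cong2[where f=bind_pmf] refl arg_cong[where f=seq_pmf] map_cong)
       (auto simp: count_Poi_replicate_pmf_uniform lam)
  finally show ?thesis by (simp only: C_def js_def)
qed

lemma opA_Poi_eq_Poisson_process:
  assumes d: "d \<ge> 1" and lam: "lam \<ge> 0"
  shows "opA d \<mu> (Poi lam) =
    Poisson_process \<mu> (pmf_of_set {0..d}) \<bind> (\<lambda>A. Poisson_process lam (pmf_of_set ({0..d} - {1})) \<bind> (\<lambda>B.
      seq_pmf (map (\<lambda>i. if i \<in># A + B then Poi (lam / d) else return_pmf 0) [2..<d+1]) \<bind>
        (\<lambda>F. return_pmf (count (A + B) 0 + sum_list F))))"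
proof -
  define K where "K = (\<lambda>M. seq_pmf (map (\<lambda>i. if i \<in># M then Poi (lam / d) else return_pmf 0) [2..<d+1]) \<bind>
        (\<lambda>F. return_pmf (count M 0 + sum_list F)))"
  have "opA d \<mu> (Poi lam) = Poi \<mu> \<bind> (\<lambda>X. replicate_pmf X (pmf_of_set {0..d}) \<bind> (\<lambda>a.
      Poi lam \<bind> (\<lambda>x. replicate_pmf x (pmf_of_set ({0..d} - {1})) \<bind> (\<lambda>b. K (mset a + mset b)))))"
    unfolding opA_eq_lazy[OF d] count_second_wave[OF lam] K_def ..
  also have "\<dots> = Poisson_process \<mu> (pmf_of_set {0..d}) \<bind> (\<lambda>A.
      Poisson_process lam (pmf_of_set ({0..d} - {1})) \<bind> (\<lambda>B. K (A + B)))"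
  proof -
    have "Poi lam \<bind> (\<lambda>x. replicate_pmf x (pmf_of_set ({0..d} - {1})) \<bind> (\<lambda>b. K (mset a + mset b))) =
        Poisson_process lam (pmf_of_set ({0..d} - {1})) \<bind> (\<lambda>B. K (mset a + B))" for a
      by (rule Poisson_process_bind)
    then show ?thesis
      by (simp add: Poisson_process_bind[where f = "\<lambda>A. Poisson_process lam _ \<bind> (\<lambda>B. K (A + B))"])
  qed
  finally show ?thesis by (simp only: K_def)
qed

lemma Poisson_process_first_wave:
  fixes d :: nat
  assumes d: "d \<ge> 2" and \<mu>: "\<mu> \<ge> 0" and lam: "lam \<ge> 0"
  shows "Poisson_process \<mu> (pmf_of_set {0..d}) \<bind> (\<lambda>A.
      Poisson_process lam (pmf_of_set ({0..d} - {1})) \<bind> (\<lambda>B. return_pmf (A + B))) =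
    Poisson_counts (\<lambda>v. if v = 1 then \<mu> / (d + 1) else \<mu> / (d + 1) + lam / d) (0 # 1 # [2..<d+1])"
proof -
  define al where "al = \<mu> / (d + 1)"
  define be where "be = lam / d"
  define js where "js = [2..<d+1]"
  define rb where "rb = (\<lambda>v::nat. if v = 1 then 0 else be)"
  have al: "al \<ge> 0" and be: "be \<ge> 0" using \<mu> lam by (simp_all add: al_def be_def)
  have js: "length js = d - 1" "0 \<notin> set js" "1 \<notin> set js" "distinct js"
    using d by (auto simp: js_def)
  have first: "Poisson_process \<mu> (pmf_of_set {0..d}) = Poisson_counts (\<lambda>_. al) (0 # 1 # js)"
  proof -
    have "{0..d} = set (0 # 1 # js)" using d by (auto simp: js_def)
    moreover have "\<mu> = al * real (length (0 # 1 # js))" using d by (simp add: js al_def of_nat_diff)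
    ultimately show ?thesis using Poisson_process_uniform[OF al, of "0 # 1 # js"] js by simp
  qed
  have second: "Poisson_process lam (pmf_of_set ({0..d} - {1})) = Poisson_counts rb (0 # 1 # js)"
  proof -
    have "{0..d} - {1} = set (0 # js)" using d by (auto simp: js_def)
    moreover have "lam = be * real (length (0 # js))" using d by (simp add: js be_def of_nat_diff)
    ultimately have "Poisson_process lam (pmf_of_set ({0..d} - {1})) = Poisson_counts (\<lambda>_. be) (0 # js)"
      using Poisson_process_uniform[OF be, of "0 # js"] js by simp
    also have "\<dots> = Poisson_counts rb (0 # js)"
      by (rule Poisson_counts_cong) (use js in \<open>auto simp: rb_def\<close>)
    also have "\<dots> = Poisson_counts rb (0 # 1 # js)"
    proof -
      have "Poisson_counts rb (1 # js) = Poisson_counts rb js"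
        by (rule Poisson_counts_Cons_rate_0) (simp add: rb_def)
      then show ?thesis by (simp only: Poisson_counts.simps(2)[of rb 0])
    qed
    finally show ?thesis .
  qed
  have "Poisson_process \<mu> (pmf_of_set {0..d}) \<bind> (\<lambda>A.
      Poisson_process lam (pmf_of_set ({0..d} - {1})) \<bind> (\<lambda>B. return_pmf (A + B))) =
      Poisson_counts (\<lambda>_. al) (0 # 1 # js) \<bind> (\<lambda>A. Poisson_counts rb (0 # 1 # js) \<bind> (\<lambda>B. return_pmf (A + B)))"
    by (simp only: first second)
  also have "\<dots> = Poisson_counts (\<lambda>v. al + rb v) (0 # 1 # js)"
    by (rule Poisson_counts_add) (use al be in \<open>simp_all add: rb_def\<close>)
  also have "\<dots> = Poisson_counts (\<lambda>v. if v = 1 then al else al + be) (0 # 1 # js)"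
    by (rule Poisson_counts_cong) (simp add: rb_def)
  finally show ?thesis by (simp only: al_def be_def js_def)
qed

lemma Poisson_counts_bind_count_add_activated:
  fixes Z :: "nat pmf"
  assumes js: "distinct js" "u \<notin> set js" "w \<notin> set js" and "u \<noteq> w" and r: "\<And>v. r v \<ge> 0"
  shows "Poisson_counts r (u # w # js) \<bind> (\<lambda>M.
      seq_pmf (map (\<lambda>i. if i \<in># M then Z else return_pmf 0) js) \<bind>
        (\<lambda>F. return_pmf (count M u + sum_list F))) =
    Poi (r u) \<bind> (\<lambda>n. seq_pmf (map (\<lambda>i. mix_pmf (1 - exp (- r i)) Z (return_pmf 0)) js) \<bind>
      (\<lambda>F. return_pmf (n + sum_list F)))"
proof -
  define S where "S = (\<lambda>M. seq_pmf (map (\<lambda>i. if i \<in># M then Z else return_pmf 0) js))"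
  have "Poisson_counts r (u # w # js) \<bind> (\<lambda>M. S M \<bind> (\<lambda>F. return_pmf (count M u + sum_list F))) =
      Poi (r u) \<bind> (\<lambda>n. Poi (r w) \<bind> (\<lambda>m. Poisson_counts r js \<bind> (\<lambda>C.
        S (replicate_mset n u + (replicate_mset m w + C)) \<bind>
          (\<lambda>F. return_pmf (count (replicate_mset n u + (replicate_mset m w + C)) u + sum_list F)))))"
    by (simp only: Poisson_counts.simps(2) bind_assoc_pmf bind_return_pmf)
  also have "\<dots> = Poi (r u) \<bind> (\<lambda>n. Poi (r w) \<bind> (\<lambda>m. Poisson_counts r js \<bind> (\<lambda>C.
        S C \<bind> (\<lambda>F. return_pmf (n + sum_list F)))))"
  proof (intro bind_pmf_cong[OF refl])
    fix n m C assume "C \<in> set_pmf (Poisson_counts r js)"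
    then have C: "set_mset C \<subseteq> set js" by (rule set_pmf_Poisson_counts)
    then have "count (replicate_mset n u + (replicate_mset m w + C)) u = n"
      using js \<open>u \<noteq> w\<close> by (auto simp: count_eq_zero_iff)
    moreover have "S (replicate_mset n u + (replicate_mset m w + C)) = S C"
      unfolding S_def using js C by (intro arg_cong[where f=seq_pmf] map_cong) auto
    ultimately show "S (replicate_mset n u + (replicate_mset m w + C)) \<bind>
        (\<lambda>F. return_pmf (count (replicate_mset n u + (replicate_mset m w + C)) u + sum_list F)) =
      S C \<bind> (\<lambda>F. return_pmf (n + sum_list F))"
      by (simp only:)
  qed
  also have "\<dots> = Poi (r u) \<bind> (\<lambda>n. (Poisson_counts r js \<bind> S) \<bind> (\<lambda>F. return_pmf (n + sum_list F)))"
    by (simp only: bind_pmf_const bind_assoc_pmf)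
  also have "Poisson_counts r js \<bind> S = seq_pmf (map (\<lambda>i. mix_pmf (1 - exp (- r i)) Z (return_pmf 0)) js)"
    unfolding S_def using js(1) r by (rule Poisson_counts_bind_seq_pmf_if_mem)
  finally show ?thesis by (simp only: S_def)
qed

lemma opA_Poi_eq_Poi_bind_activated:
  fixes d :: nat
  assumes d: "d \<ge> 2" and \<mu>: "\<mu> \<ge> 0" and lam: "lam \<ge> 0"
  shows "opA d \<mu> (Poi lam) = Poi (\<mu> / (d + 1) + lam / d) \<bind> (\<lambda>n.
    map_pmf sum_list (replicate_pmf (d - 1)
      (mix_pmf (1 - exp (- (\<mu> / (d + 1) + lam / d))) (Poi (lam / d)) (return_pmf 0))) \<bind>
    (\<lambda>s. return_pmf (n + s)))"
proof -
  define al where "al = \<mu> / (d + 1)"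
  define be where "be = lam / d"
  define js where "js = [2..<d+1]"
  define r where "r = (\<lambda>v::nat. if v = 1 then al else al + be)"
  have al: "al \<ge> 0" and be: "be \<ge> 0" using \<mu> lam by (simp_all add: al_def be_def)
  have js: "length js = d - 1" "0 \<notin> set js" "1 \<notin> set js" "distinct js"
    using d by (auto simp: js_def)
  have "opA d \<mu> (Poi lam) = (Poisson_process \<mu> (pmf_of_set {0..d}) \<bind> (\<lambda>A.
      Poisson_process lam (pmf_of_set ({0..d} - {1})) \<bind> (\<lambda>B. return_pmf (A + B)))) \<bind> (\<lambda>M.
        seq_pmf (map (\<lambda>i. if i \<in># M then Poi be else return_pmf 0) js) \<bind>
          (\<lambda>F. return_pmf (count M 0 + sum_list F)))"
    unfolding js_def be_def using d
    by (simp add: opA_Poi_eq_Poisson_process lam bind_assoc_pmf bind_return_pmf)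
  also have "\<dots> = Poisson_counts r (0 # 1 # js) \<bind> (\<lambda>M.
        seq_pmf (map (\<lambda>i. if i \<in># M then Poi be else return_pmf 0) js) \<bind>
          (\<lambda>F. return_pmf (count M 0 + sum_list F)))"
    unfolding Poisson_process_first_wave[OF d \<mu> lam] r_def al_def be_def js_def ..
  also have "\<dots> = Poi (r 0) \<bind> (\<lambda>n. seq_pmf (map (\<lambda>i. mix_pmf (1 - exp (- r i)) (Poi be) (return_pmf 0)) js) \<bind>
      (\<lambda>F. return_pmf (n + sum_list F)))"
    by (rule Poisson_counts_bind_count_add_activated) (use js al be in \<open>auto simp: r_def\<close>)
  also have "map (\<lambda>i. mix_pmf (1 - exp (- r i)) (Poi be) (return_pmf 0)) js =
      replicate (d - 1) (mix_pmf (1 - exp (- (al + be))) (Poi be) (return_pmf 0))"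
  proof -
    have "map (\<lambda>i. mix_pmf (1 - exp (- r i)) (Poi be) (return_pmf 0)) js =
        map (\<lambda>_. mix_pmf (1 - exp (- (al + be))) (Poi be) (return_pmf 0)) js"
      using js by (intro map_cong) (auto simp: r_def)
    then show ?thesis by (simp only: map_replicate_const js(1))
  qed
  finally show ?thesis
    by (simp add: r_def seq_pmf_replicate bind_map_pmf al_def be_def)
qed

theorem mainTheorem9:
  fixes d :: nat and \<mu> lam :: real
  assumes "d \<ge> 2" and "\<mu> > 0" and "lam \<ge> 0"
  shows "opA d \<mu> (Poi lam) =
    do {
      U \<leftarrow> binomial_pmf (d - 1) (1 - exp (- lam / d - \<mu> / (d + 1)));
      Poi ((real U + 1) * lam / d + \<mu> / (d + 1))
    }"
proof -
  define al where "al = \<mu> / (d + 1)"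
  define be where "be = lam / d"
  define p where "p = 1 - exp (- (al + be))"
  have al: "al \<ge> 0" and be: "be \<ge> 0" using assms by (simp_all add: al_def be_def)
  then have p: "0 \<le> p" "p \<le> 1" by (simp_all add: p_def)
  have "opA d \<mu> (Poi lam) = Poi (al + be) \<bind> (\<lambda>n.
      map_pmf sum_list (replicate_pmf (d - 1) (mix_pmf p (Poi be) (return_pmf 0))) \<bind>
      (\<lambda>s. return_pmf (n + s)))"
    unfolding al_def be_def p_def using assms by (simp add: opA_Poi_eq_Poi_bind_activated)
  also have "\<dots> = binomial_pmf (d - 1) p \<bind> (\<lambda>U. Poi (al + be + real U * be))"
    using al be by (simp add: binomial_pmf_bind_Poi[OF p be])
  finally show ?thesis
    by (simp add: al_def be_def p_def algebra_simps add_divide_distrib)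
qed

end
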